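(* Assume $p_{X,Y}\ne p_Xp_Y$ (where $p_{X,Y}=p_Xp_{Y|X}$). Let $(X_1,Y_1),(X_2,Y_2)$ be distributed according to $p_{X,Y}$ marginally, and define $p_0=\Pr(Y_1\ne Y_2)$ when $X_1,X_2$ are independent (each $Y_k$ drawn from $p_{Y|X}(\cdot\mid X_k)$ independently), and $p_1=\Pr(Y_1\neq Y_2)$ when $X_1=X_2$ (and $Y_1,Y_2$ are conditionally independent given $X_1$, each with law $p_{Y|X}(\cdot\mid X_1)$). Then $p_1<p_0$. Fix any $\tau$ with $p_1<\tau<p_0$ (not depending on $n$). Let $C_1^{m_n},\dots,C_K^{m_n}$ be the columns of $\mathbf{D}^{(2)}$, and consider the algorithm that, for each $j\in[K-1]$, declares $C_j^{m_n}$ and $C_{j+1}^{m_n}$ to be replicas (noisy copies of the same column of $\mathbf{D}^{(1)}$) if $d_H(C_j^{m_n},C_{j+1}^{m_n})<m_n\tau$ and declares them to come from different columns of $\mathbf{D}^{(1)}$ otherwise. Let $E_j$ be the event that this decision is wrong for the pair $(C_j^{m_n},C_{j+1}^{m_n})$. If $m_n$ grows exponentially in $n$ (i.e. the database growth rate $R=\lim_n \frac1n\log m_n$ satisfies $R>0$), then $$\Pr\Big(\bigcup_{j=1}^{K-1}E_j\Big)\to 0\quad\text{as } n\to\infty.$$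
   Context: $\mathbf{D}^{(1)}$ is an $m_n\times n$ matrix with i.i.d. entries from $p_X$ on a finite set $\mathfrak{X}$; $S^n$ has i.i.d. entries from $p_S$ on $\{0,\dots,s_{\max}\}$; $\boldsymbol{\Theta}_n$ is a uniform permutation of $[m_n]$, independent of everything else. $\mathbf{D}^{(2)}$ is obtained by replacing, in row $i$, the entry at column $j$ by the empty string if $S_j=0$ and by $S_j$ conditionally i.i.d. outputs of the channel $p_{Y|X}$ with input $D^{(1)}_{\boldsymbol{\Theta}_n^{-1}(i),j}$ if $S_j\ge1$ (all noise independent). Hence $\mathbf{D}^{(2)}$ has $K=\sum_j S_j$ columns, and two consecutive columns of $\mathbf{D}^{(2)}$ are replicas if they are noisy copies of the same column of $\mathbf{D}^{(1)}$. $d_H$ denotes Hamming distance between two columns of length $m_n$. *)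

theory Defs
  imports "HOL-Probability.Probability"
begin

definition joint_pmf :: "'x pmf \<Rightarrow> ('x \<Rightarrow> 'y pmf) \<Rightarrow> ('x \<times> 'y) pmf" where
  "joint_pmf pX pYX = do { x \<leftarrow> pX; y \<leftarrow> pYX x; return_pmf (x, y) }"

definition out_pmf :: "'x pmf \<Rightarrow> ('x \<Rightarrow> 'y pmf) \<Rightarrow> 'y pmf" where
  "out_pmf pX pYX = do { x \<leftarrow> pX; pYX x }"

definition p0 :: "'x pmf \<Rightarrow> ('x \<Rightarrow> 'y pmf) \<Rightarrow> real" where
  "p0 pX pYX = measure_pmf.prob
     (do { x1 \<leftarrow> pX; x2 \<leftarrow> pX; y1 \<leftarrow> pYX x1; y2 \<leftarrow> pYX x2; return_pmf (y1, y2) })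
     {(a, b). a \<noteq> b}"

definition p1 :: "'x pmf \<Rightarrow> ('x \<Rightarrow> 'y pmf) \<Rightarrow> real" where
  "p1 pX pYX = measure_pmf.prob
     (do { x \<leftarrow> pX; y1 \<leftarrow> pYX x; y2 \<leftarrow> pYX x; return_pmf (y1, y2) })
     {(a, b). a \<noteq> b}"

text \<open>D1 has iid p_X entries, S has iid p_S entries,
  Theta is a uniform permutation of the rows, and entry (i,j) of D2 is a list of
  S_j conditionally iid outputs of the channel with input D1 (Theta^{-1} i) j.\<close>
definition db_dist :: "'x pmf \<Rightarrow> ('x \<Rightarrow> 'y pmf) \<Rightarrow> nat pmf \<Rightarrow> nat \<Rightarrow> nat
    \<Rightarrow> ((nat \<Rightarrow> nat) \<times> (nat \<Rightarrow> nat \<Rightarrow> 'y list)) pmf" where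
  "db_dist pX pYX pS m n = do {
     D1 \<leftarrow> Pi_pmf ({..<m} \<times> {..<n}) undefined (\<lambda>_. pX);
     S \<leftarrow> Pi_pmf {..<n} 0 (\<lambda>_. pS);
     \<Theta> \<leftarrow> pmf_of_set {\<sigma>. \<sigma> permutes {..<m}};
     D2 \<leftarrow> Pi_pmf ({..<m} \<times> {..<n}) []
             (\<lambda>(i, j). replicate_pmf (S j) (pYX (D1 (inv \<Theta> i, j))));
     return_pmf (S, curry D2) }"

definition num_cols :: "(nat \<Rightarrow> nat) \<Rightarrow> nat \<Rightarrow> nat" where
  "num_cols S n = (\<Sum>j<n. S j)"

definition col :: "nat \<Rightarrow> (nat \<Rightarrow> nat \<Rightarrow> 'y list) \<Rightarrow> nat \<Rightarrow> nat \<Rightarrow> 'y" where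
  "col n D2 c i = concat (map (\<lambda>j. D2 i j) [0..<n]) ! c"

definition origin :: "(nat \<Rightarrow> nat) \<Rightarrow> nat \<Rightarrow> nat \<Rightarrow> nat" where
  "origin S n c = concat (map (\<lambda>j. replicate (S j) j) [0..<n]) ! c"

definition dH :: "nat \<Rightarrow> (nat \<Rightarrow> 'y) \<Rightarrow> (nat \<Rightarrow> 'y) \<Rightarrow> nat" where
  "dH m C C' = card {i. i < m \<and> C i \<noteq> C' i}"

text \<open>Union of the error events E_j, j in [K-1] (0-based pairs (c, c+1)).\<close>
definition err_event :: "nat \<Rightarrow> nat \<Rightarrow> real
    \<Rightarrow> ((nat \<Rightarrow> nat) \<times> (nat \<Rightarrow> nat \<Rightarrow> 'y list)) set" where
  "err_event m n \<tau> = {(S, D2). \<exists>c. c + 1 < num_cols S n \<and>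
      ((real (dH m (col n D2 c) (col n D2 (c + 1))) < real m * \<tau>)
        \<noteq> (origin S n c = origin S n (c + 1)))}"

end

theory Submission
  imports Defs
begin

text \<open>
  Given \<open>S\<close>, the permutation only relabels the i.i.d. rows of the database, so the rows of
  \<open>D\<^sup>(\<^sup>2\<^sup>)\<close> are i.i.d. and the Hamming distance of two adjacent columns is binomial with
  \<open>m\<^sub>n\<close> trials: two entries of one row disagree with probability \<open>p\<^sub>1\<close> if the columns are replicas
  (same channel input) and with probability \<open>p\<^sub>0\<close> otherwise (independent inputs).
  Since \<open>p\<^sub>0 - p\<^sub>1 = \<Sum>\<^sub>y Var(p\<^sub>Y\<^sub>|\<^sub>X(y|X))\<close>, which vanishes only if \<open>X\<close> and \<open>Y\<close> are independent,
  the threshold \<open>\<tau>\<close> separates the two cases, and by Hoeffding each test errs with probability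
  at most \<open>exp(-2 m\<^sub>n \<delta>\<^sup>2)\<close>, where \<open>\<delta>\<close> is the distance from \<open>\<tau>\<close> to \<open>{p\<^sub>0, p\<^sub>1}\<close>.
  A union bound over the at most \<open>n s\<^sub>m\<^sub>a\<^sub>x\<close> adjacent pairs gives \<open>n s\<^sub>m\<^sub>a\<^sub>x exp(-2 m\<^sub>n \<delta>\<^sup>2)\<close>,
  which tends to zero because \<open>m\<^sub>n\<close> grows exponentially.
\<close>

lemma measure_pmf_bind_le:
  assumes "\<And>x. x \<in> set_pmf M \<Longrightarrow> measure_pmf.prob (N x) A \<le> b" "0 \<le> b"
  shows "measure_pmf.prob (bind_pmf M N) A \<le> b"
proof -
  have "emeasure (measure_pmf (bind_pmf M N)) A = (\<integral>\<^sup>+x. emeasure (measure_pmf (N x)) A \<partial>M)"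
    by simp
  also have "\<dots> \<le> (\<integral>\<^sup>+x. ennreal b \<partial>M)"
    using assms(1) by (intro nn_integral_mono_AE)
      (auto simp: AE_measure_pmf_iff measure_pmf.emeasure_eq_measure ennreal_leI)
  also have "\<dots> = ennreal b" by (simp add: measure_pmf.emeasure_space_1)
  finally show ?thesis using assms(2) by (simp add: measure_pmf.emeasure_eq_measure)
qed

lemma map_pmf_eq_bernoulli_pmf: "map_pmf P M = bernoulli_pmf (measure_pmf.prob M {x. P x})"
proof (rule pmf_eqI)
  fix b :: bool
  have "pmf (map_pmf P M) True = measure_pmf.prob M {x. P x}"
    by (simp add: pmf_map vimage_def)
  then show "pmf (map_pmf P M) b = pmf (bernoulli_pmf (measure_pmf.prob M {x. P x})) b"
    by (cases b) (simp_all add: pmf_False_conv_True[of "map_pmf P M"])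
qed

lemma measure_pmf_prob_neq:
  fixes M :: "('y::finite \<times> 'y) pmf"
  shows "measure_pmf.prob M {(a, b). a \<noteq> b} = 1 - (\<Sum>y\<in>UNIV. pmf M (y, y))"
proof -
  have "{(a, b). a \<noteq> b} = space M - (\<lambda>y. (y, y)) ` UNIV" by auto
  then have "measure_pmf.prob M {(a, b). a \<noteq> b} = 1 - measure_pmf.prob M ((\<lambda>y. (y, y)) ` UNIV)"
    using measure_pmf.prob_compl[of "(\<lambda>y. (y, y)) ` UNIV" M] by simp
  also have "measure_pmf.prob M ((\<lambda>y. (y, y)) ` UNIV) = (\<Sum>y\<in>UNIV. pmf M (y, y))"
    by (subst measure_measure_pmf_finite) (auto simp: sum.reindex inj_on_def)
  finally show ?thesis .
qed

lemma replicate_pmf_Suc_map: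
  "replicate_pmf (Suc s) q = bind_pmf q (\<lambda>x. map_pmf (\<lambda>xs. x # xs) (replicate_pmf s q))"
  by (simp only: replicate_pmf.simps map_pmf_def)

lemma map_nth_replicate_pmf: "k < s \<Longrightarrow> map_pmf (\<lambda>l. l ! k) (replicate_pmf s q) = q"
proof (induction s arbitrary: k)
  case 0
  then show ?case by simp
next
  case (Suc s)
  show ?case
  proof (cases k)
    case 0
    then have "map_pmf (\<lambda>l. l ! k) (replicate_pmf (Suc s) q) =
        bind_pmf q (\<lambda>x. map_pmf (\<lambda>_. x) (replicate_pmf s q))"
      by (simp only: replicate_pmf_Suc_map map_bind_pmf map_pmf_comp nth_Cons_0)
    then show ?thesis by (simp only: map_pmf_const bind_return_pmf')
  next
    case (Suc k')
    with Suc.prems have "map_pmf (\<lambda>l. l ! k) (replicate_pmf (Suc s) q) = bind_pmf q (\<lambda>_. q)"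
      by (simp only: replicate_pmf_Suc_map map_bind_pmf map_pmf_comp nth_Cons_Suc
          Suc.IH Suc_less_eq)
    then show ?thesis by (simp only: bind_pmf_const)
  qed
qed

lemma map_nth_pair_replicate_pmf:
  "k < s \<Longrightarrow> k' < s \<Longrightarrow> k \<noteq> k' \<Longrightarrow>
    map_pmf (\<lambda>l. (l ! k, l ! k')) (replicate_pmf s q) = pair_pmf q q"
proof (induction s arbitrary: k k')
  case 0
  then show ?case by simp
next
  case (Suc s)
  consider "k = 0" "0 < k'" | k1 where "k = Suc k1" "k' = 0" | k1 k2 where "k = Suc k1" "k' = Suc k2"
    using Suc.prems by (cases k; cases k') auto
  then show ?case
  proof cases
    case 1
    then obtain k2 where k2: "k' = Suc k2" "k2 < s" using Suc.prems by (cases k') auto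
    have "map_pmf (\<lambda>l. (l ! k, l ! k')) (replicate_pmf (Suc s) q) =
          bind_pmf q (\<lambda>x. map_pmf (\<lambda>y. (x, y)) (map_pmf (\<lambda>l. l ! k2) (replicate_pmf s q)))"
      by (simp only: replicate_pmf_Suc_map map_bind_pmf map_pmf_comp 1 k2(1) nth_Cons_0 nth_Cons_Suc)
    also have "\<dots> = bind_pmf q (\<lambda>x. map_pmf (\<lambda>y. (x, y)) q)"
      by (simp only: map_nth_replicate_pmf[OF k2(2)])
    also have "\<dots> = pair_pmf q q"
      by (simp only: pair_pmf_def map_pmf_def)
    finally show ?thesis .
  next
    case 2
    then have k1: "k1 < s" using Suc.prems by simp
    have "map_pmf (\<lambda>l. (l ! k, l ! k')) (replicate_pmf (Suc s) q) =
          bind_pmf q (\<lambda>x. map_pmf (\<lambda>y. (y, x)) (map_pmf (\<lambda>l. l ! k1) (replicate_pmf s q)))"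
      by (simp only: replicate_pmf_Suc_map map_bind_pmf map_pmf_comp 2 nth_Cons_0 nth_Cons_Suc)
    also have "\<dots> = bind_pmf q (\<lambda>x. map_pmf (\<lambda>y. (y, x)) q)"
      by (simp only: map_nth_replicate_pmf[OF k1])
    also have "\<dots> = bind_pmf q (\<lambda>x. bind_pmf q (\<lambda>y. return_pmf (y, x)))"
      by (simp only: map_pmf_def)
    also have "\<dots> = pair_pmf q q"
      unfolding pair_pmf_def by (rule bind_commute_pmf)
    finally show ?thesis .
  next
    case 3
    then have k12: "k1 < s" "k2 < s" "k1 \<noteq> k2" using Suc.prems by auto
    have "map_pmf (\<lambda>l. (l ! k, l ! k')) (replicate_pmf (Suc s) q) = bind_pmf q (\<lambda>_. pair_pmf q q)"
      by (simp only: replicate_pmf_Suc_map map_bind_pmf map_pmf_comp 3 nth_Cons_Suc Suc.IH[OF k12])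
    then show ?thesis by (simp only: bind_pmf_const)
  qed
qed

lemma Pi_pmf_Times:
  assumes "finite A" "finite B"
  shows "Pi_pmf (A \<times> B) d (\<lambda>(a, b). Q a b) =
         map_pmf case_prod (Pi_pmf A (\<lambda>_. d) (\<lambda>a. Pi_pmf B d (Q a)))"
proof (rule pmf_eqI)
  fix g :: "'a \<times> 'b \<Rightarrow> 'c"
  have "inj (case_prod :: ('a \<Rightarrow> 'b \<Rightarrow> 'c) \<Rightarrow> _)"
    by (intro injI) (metis curry_case_prod)
  then have "pmf (map_pmf case_prod (Pi_pmf A (\<lambda>_. d) (\<lambda>a. Pi_pmf B d (Q a)))) g
        = pmf (Pi_pmf A (\<lambda>_. d) (\<lambda>a. Pi_pmf B d (Q a))) (curry g)"
    by (metis case_prod_curry pmf_map_inj')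
  also have "\<dots> = pmf (Pi_pmf (A \<times> B) d (\<lambda>(a, b). Q a b)) g"
  proof (cases "\<forall>x. x \<notin> A \<times> B \<longrightarrow> g x = d")
    case True
    then have "\<forall>x. x \<notin> A \<longrightarrow> curry g x = (\<lambda>_. d)" by (auto simp: fun_eq_iff)
    then have "pmf (Pi_pmf A (\<lambda>_. d) (\<lambda>a. Pi_pmf B d (Q a))) (curry g) =
          (\<Prod>a\<in>A. \<Prod>b\<in>B. pmf (Q a b) (g (a, b)))"
      using True assms by (simp add: pmf_Pi)
    also have "\<dots> = pmf (Pi_pmf (A \<times> B) d (\<lambda>(a, b). Q a b)) g"
      using True assms by (simp add: pmf_Pi prod.cartesian_product case_prod_unfold)
    finally show ?thesis .
  next
    case False
    then obtain a b where ab: "(a, b) \<notin> A \<times> B" "g (a, b) \<noteq> d" by auto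
    have "pmf (Pi_pmf A (\<lambda>_. d) (\<lambda>a. Pi_pmf B d (Q a))) (curry g) = 0"
    proof (cases "a \<in> A")
      case False
      then show ?thesis using ab assms by (intro pmf_Pi_outside) (auto simp: fun_eq_iff)
    next
      case True
      with ab assms have "pmf (Pi_pmf B d (Q a)) (curry g a) = 0"
        by (intro pmf_Pi_outside) auto
      then have "(\<Prod>a\<in>A. pmf (Pi_pmf B d (Q a)) (curry g a)) = 0"
        using True assms by (intro prod_zero) auto
      then show ?thesis using assms by (auto simp: pmf_Pi)
    qed
    moreover have "pmf (Pi_pmf (A \<times> B) d (\<lambda>(a, b). Q a b)) g = 0"
      using ab assms by (intro pmf_Pi_outside) auto
    ultimately show ?thesis by simp
  qed
  finally show "pmf (Pi_pmf (A \<times> B) d (\<lambda>(a, b). Q a b)) g =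
        pmf (map_pmf case_prod (Pi_pmf A (\<lambda>_. d) (\<lambda>a. Pi_pmf B d (Q a)))) g" ..
qed

lemma map_pmf_Pi_pmf_pair:
  assumes "finite B" "j \<in> B" "j' \<in> B" "j \<noteq> j'"
  shows "map_pmf (\<lambda>L. (L j, L j')) (Pi_pmf B d Q) = pair_pmf (Q j) (Q j')"
proof -
  have "Pi_pmf {j, j'} d Q = map_pmf (\<lambda>f x. if x \<in> {j, j'} then f x else d) (Pi_pmf B d Q)"
    using assms by (intro Pi_pmf_subset) auto
  then have "map_pmf (\<lambda>L. (L j, L j')) (Pi_pmf B d Q) = map_pmf (\<lambda>L. (L j, L j')) (Pi_pmf {j, j'} d Q)"
    by (simp add: map_pmf_comp)
  also have "Pi_pmf {j, j'} d Q = map_pmf (\<lambda>(y, f). f(j := y)) (pair_pmf (Q j) (Pi_pmf {j'} d Q))"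
    using assms by (intro Pi_pmf_insert) auto
  also have "map_pmf (\<lambda>L. (L j, L j')) \<dots> = pair_pmf (Q j) (map_pmf (\<lambda>f. f j') (Pi_pmf {j'} d Q))"
    using assms by (simp add: map_pmf_comp case_prod_unfold pair_map_pmf2 apsnd_def map_prod_def)
  also have "map_pmf (\<lambda>f. f j') (Pi_pmf {j'} d Q) = Q j'"
    by (subst Pi_pmf_component) auto
  finally show ?thesis .
qed

section \<open>The disagreement probabilities\<close>

lemma p0_law_eq_pair_out_pmf:
  "do { x1 \<leftarrow> pX; x2 \<leftarrow> pX; y1 \<leftarrow> pYX x1; y2 \<leftarrow> pYX x2; return_pmf (y1, y2) }
     = pair_pmf (out_pmf pX pYX) (out_pmf pX pYX)"
proof -
  have "do { x1 \<leftarrow> pX; x2 \<leftarrow> pX; y1 \<leftarrow> pYX x1; y2 \<leftarrow> pYX x2; return_pmf (y1, y2) }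
     = do { x1 \<leftarrow> pX; y1 \<leftarrow> pYX x1; x2 \<leftarrow> pX; y2 \<leftarrow> pYX x2; return_pmf (y1, y2) }"
    by (subst bind_commute_pmf) simp
  then show ?thesis by (simp add: pair_pmf_def out_pmf_def bind_assoc_pmf)
qed

lemma p1_law_eq_bind_pair_pmf:
  "do { x \<leftarrow> pX; y1 \<leftarrow> pYX x; y2 \<leftarrow> pYX x; return_pmf (y1, y2) }
     = bind_pmf pX (\<lambda>x. pair_pmf (pYX x) (pYX x))"
  by (simp add: pair_pmf_def)

lemma p0_p1_in_unit_interval:
  "p0 pX pYX \<in> {0..1}" "p1 pX pYX \<in> {0..1}"
  unfolding p0_def p1_def by auto

lemma pmf_out_pmf:
  fixes pX :: "'x::finite pmf"
  shows "pmf (out_pmf pX pYX) y = (\<Sum>x\<in>UNIV. pmf pX x * pmf (pYX x) y)"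
  unfolding out_pmf_def pmf_bind
  by (subst integral_measure_pmf_real[where A=UNIV]) (auto simp: mult.commute)

lemma pmf_joint_pmf:
  fixes pX :: "'x::finite pmf"
  shows "pmf (joint_pmf pX pYX) (x, y) = pmf pX x * pmf (pYX x) y"
proof -
  have joint: "joint_pmf pX pYX = bind_pmf pX (\<lambda>x'. map_pmf (Pair x') (pYX x'))"
    by (simp add: joint_pmf_def map_pmf_def)
  have "pmf (joint_pmf pX pYX) (x, y) =
      (\<Sum>x'\<in>UNIV. pmf pX x' * pmf (map_pmf (Pair x') (pYX x')) (x, y))"
    unfolding joint pmf_bind by (subst integral_measure_pmf_real[where A=UNIV]) (auto simp: mult.commute)
  also have "\<dots> = (\<Sum>x'\<in>UNIV. if x' = x then pmf pX x * pmf (pYX x) y else 0)"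
  proof (rule sum.cong[OF refl])
    fix x'
    show "pmf pX x' * pmf (map_pmf (Pair x') (pYX x')) (x, y) =
        (if x' = x then pmf pX x * pmf (pYX x) y else 0)"
      by (cases "x' = x") (auto simp: pmf_map_inj' inj_on_def pmf_eq_0_set_pmf)
  qed
  finally show ?thesis by simp
qed

lemma p0_minus_p1:
  fixes pX :: "'x::finite pmf" and pYX :: "'x \<Rightarrow> 'y::finite pmf"
  shows "p0 pX pYX - p1 pX pYX =
    (\<Sum>y\<in>UNIV. \<Sum>x\<in>UNIV. pmf pX x * (pmf (pYX x) y - pmf (out_pmf pX pYX) y)\<^sup>2)"
proof -
  define r where "r y = pmf (out_pmf pX pYX) y" for y
  have p1: "p1 pX pYX = 1 - (\<Sum>y\<in>UNIV. \<Sum>x\<in>UNIV. pmf pX x * (pmf (pYX x) y)\<^sup>2)"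
    unfolding p1_def p1_law_eq_bind_pair_pmf measure_pmf_prob_neq pmf_bind
    by (subst integral_measure_pmf_real[where A=UNIV])
      (auto simp: pmf_pair power2_eq_square mult.commute)
  have p0: "p0 pX pYX = 1 - (\<Sum>y\<in>UNIV. (r y)\<^sup>2)"
    unfolding p0_def p0_law_eq_pair_out_pmf measure_pmf_prob_neq pmf_pair r_def
    by (simp add: power2_eq_square)
  have variance: "(\<Sum>x\<in>UNIV. pmf pX x * (pmf (pYX x) y - r y)\<^sup>2) =
      (\<Sum>x\<in>UNIV. pmf pX x * (pmf (pYX x) y)\<^sup>2) - (r y)\<^sup>2" for y
  proof -
    have "(\<Sum>x\<in>UNIV. pmf pX x * (pmf (pYX x) y - r y)\<^sup>2) =
        (\<Sum>x\<in>UNIV. pmf pX x * (pmf (pYX x) y)\<^sup>2) - 2 * r y * (\<Sum>x\<in>UNIV. pmf pX x * pmf (pYX x) y)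
          + (r y)\<^sup>2 * (\<Sum>x\<in>UNIV. pmf pX x)"
      by (simp add: power2_eq_square algebra_simps sum.distrib sum_subtractf sum_distrib_left)
    then show ?thesis by (simp add: r_def pmf_out_pmf sum_pmf_eq_1 power2_eq_square)
  qed
  show ?thesis
    unfolding p0 p1 r_def[symmetric] variance by (simp add: sum_subtractf)
qed

lemma p1_less_p0:
  fixes pX :: "'x::finite pmf" and pYX :: "'x \<Rightarrow> 'y::finite pmf"
  assumes "joint_pmf pX pYX \<noteq> pair_pmf pX (out_pmf pX pYX)"
  shows "p1 pX pYX < p0 pX pYX"
proof -
  obtain x0 y0 where "pmf (joint_pmf pX pYX) (x0, y0) \<noteq> pmf (pair_pmf pX (out_pmf pX pYX)) (x0, y0)"
    using assms pmf_eqI by (metis surj_pair)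
  then have "pmf pX x0 * pmf (pYX x0) y0 \<noteq> pmf pX x0 * pmf (out_pmf pX pYX) y0"
    by (simp add: pmf_joint_pmf pmf_pair)
  then have pos: "0 < pmf pX x0 * (pmf (pYX x0) y0 - pmf (out_pmf pX pYX) y0)\<^sup>2"
    by (cases "pmf pX x0 = 0") auto
  have "0 < (\<Sum>y\<in>UNIV. \<Sum>x\<in>UNIV. pmf pX x * (pmf (pYX x) y - pmf (out_pmf pX pYX) y)\<^sup>2)"
    using pos by (intro sum_pos2[where i=y0] sum_pos2[where i=x0] sum_nonneg) auto
  then show ?thesis using p0_minus_p1[of pX pYX] by simp
qed

section \<open>The law of the observed database given the repetition pattern\<close>

definition entry_pmf :: "'x pmf \<Rightarrow> ('x \<Rightarrow> 'y pmf) \<Rightarrow> nat \<Rightarrow> 'y list pmf" where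
  "entry_pmf pX pYX s = bind_pmf pX (\<lambda>x. replicate_pmf s (pYX x))"

definition noisy_db_pmf :: "'x pmf \<Rightarrow> ('x \<Rightarrow> 'y pmf) \<Rightarrow> (nat \<Rightarrow> nat) \<Rightarrow> nat \<Rightarrow> nat
    \<Rightarrow> (nat \<times> nat \<Rightarrow> 'y list) pmf" where
  "noisy_db_pmf pX pYX S m n = Pi_pmf ({..<m} \<times> {..<n}) [] (\<lambda>(i, j). entry_pmf pX pYX (S j))"

lemma bind_Pi_pmf_permuted_rows:
  assumes perm: "\<Theta> permutes {..<m}"
  shows "bind_pmf (Pi_pmf ({..<m} \<times> {..<n}) undefined (\<lambda>_. pX))
           (\<lambda>D1. Pi_pmf ({..<m} \<times> {..<n}) []
              (\<lambda>(i, j). replicate_pmf (S j) (pYX (D1 (inv \<Theta> i, j)))))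
         = noisy_db_pmf pX pYX S m n"
proof -
  define AB where "AB = {..<m} \<times> {..<n}"
  define h where "h = (\<lambda>(i::nat, j::nat). (inv \<Theta> i, j))"
  define Q where "Q = (\<lambda>(k::nat \<times> nat) x. replicate_pmf (S (snd k)) (pYX x))"
  have fin: "finite AB" by (simp add: AB_def)
  have inv_perm: "inv \<Theta> permutes {..<m}" using permutes_inv[OF perm] .
  have in_range: "\<Theta> a < m \<longleftrightarrow> a < m" "inv \<Theta> a < m \<longleftrightarrow> a < m" for a
    using permutes_in_image[OF perm, of a] permutes_in_image[OF inv_perm, of a] by simp_all
  have bij: "bij_betw h AB AB"
    unfolding h_def AB_def
    by (rule bij_betwI[where g="\<lambda>(i, j). (\<Theta> i, j)"])
      (auto simp: permutes_inverses[OF perm] in_range)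
  have outside: "h x \<notin> AB" if "x \<notin> AB" for x
    using that in_range unfolding h_def AB_def by (auto split: prod.splits)
  have "(\<lambda>(i, j). replicate_pmf (S j) (pYX (D1 (inv \<Theta> i, j)))) = (\<lambda>k. Q k ((D1 \<circ> h) k))"
    for D1 :: "nat \<times> nat \<Rightarrow> _"
    by (auto simp: Q_def h_def fun_eq_iff)
  then have "bind_pmf (Pi_pmf AB undefined (\<lambda>_. pX))
           (\<lambda>D1. Pi_pmf AB [] (\<lambda>(i, j). replicate_pmf (S j) (pYX (D1 (inv \<Theta> i, j)))))
        = bind_pmf (map_pmf (\<lambda>g. g \<circ> h) (Pi_pmf AB undefined (\<lambda>_. pX)))
            (\<lambda>D. Pi_pmf AB [] (\<lambda>k. Q k (D k)))"
    by (simp only: bind_map_pmf)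
  also have "\<dots> = bind_pmf (Pi_pmf AB undefined (\<lambda>_. pX)) (\<lambda>D. Pi_pmf AB [] (\<lambda>k. Q k (D k)))"
    using Pi_pmf_bij_betw[OF fin bij outside, of undefined pX] by simp
  also have "\<dots> = Pi_pmf AB [] (\<lambda>k. bind_pmf pX (Q k))"
    by (rule Pi_pmf_bind[OF fin, symmetric])
  also have "\<dots> = noisy_db_pmf pX pYX S m n"
    unfolding noisy_db_pmf_def AB_def Q_def entry_pmf_def by (intro Pi_pmf_cong) auto
  finally show ?thesis unfolding AB_def .
qed

lemma db_dist_eq_bind_noisy_db_pmf:
  "db_dist pX pYX pS m n = bind_pmf (Pi_pmf {..<n} 0 (\<lambda>_. pS))
      (\<lambda>S. map_pmf (\<lambda>D2. (S, curry D2)) (noisy_db_pmf pX pYX S m n))"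
proof -
  define PD where "PD = Pi_pmf ({..<m} \<times> {..<n}) undefined (\<lambda>_. pX)"
  define PS where "PS = Pi_pmf {..<n} 0 (\<lambda>_. pS)"
  define U where "U = pmf_of_set {\<sigma>. \<sigma> permutes {..<m}}"
  define F where "F = (\<lambda>(D1 :: nat \<times> nat \<Rightarrow> _) S (\<Theta> :: nat \<Rightarrow> nat).
      map_pmf (\<lambda>D2. (S, curry D2))
        (Pi_pmf ({..<m} \<times> {..<n}) [] (\<lambda>(i, j). replicate_pmf (S j) (pYX (D1 (inv \<Theta> i, j))))))"
  have "db_dist pX pYX pS m n = bind_pmf PD (\<lambda>D1. bind_pmf PS (\<lambda>S. bind_pmf U (\<lambda>\<Theta>. F D1 S \<Theta>)))"
    unfolding db_dist_def PD_def PS_def U_def F_def map_pmf_def ..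
  also have "\<dots> = bind_pmf PS (\<lambda>S. bind_pmf U (\<lambda>\<Theta>. bind_pmf PD (\<lambda>D1. F D1 S \<Theta>)))"
    by (subst bind_commute_pmf, subst bind_commute_pmf) (rule refl)
  also have "\<dots> = bind_pmf PS (\<lambda>S. bind_pmf U (\<lambda>_. map_pmf (\<lambda>D2. (S, curry D2)) (noisy_db_pmf pX pYX S m n)))"
  proof (intro bind_pmf_cong refl)
    fix S \<Theta> assume "\<Theta> \<in> set_pmf U"
    then have "\<Theta> permutes {..<m}"
      unfolding U_def
      by (subst (asm) set_pmf_of_set) (auto simp: finite_permutations permutes_id intro: exI[of _ id])
    then show "bind_pmf PD (\<lambda>D1. F D1 S \<Theta>) = map_pmf (\<lambda>D2. (S, curry D2)) (noisy_db_pmf pX pYX S m n)"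
      unfolding F_def PD_def map_bind_pmf[symmetric] by (simp only: bind_Pi_pmf_permuted_rows)
  qed
  finally show ?thesis unfolding PS_def by (simp only: bind_pmf_const)
qed

lemma length_noisy_db_entry:
  assumes "D2 \<in> set_pmf (noisy_db_pmf pX pYX S m n)" "i < m" "j < n"
  shows "length (D2 (i, j)) = S j"
proof -
  have "D2 (i, j) \<in> set_pmf (entry_pmf pX pYX (S j))"
    using assms unfolding noisy_db_pmf_def by (subst (asm) set_Pi_pmf) (auto simp: PiE_dflt_def)
  then show ?thesis unfolding entry_pmf_def by (auto simp: set_replicate_pmf)
qed

lemma map_nth_entry_pmf: "k < s \<Longrightarrow> map_pmf (\<lambda>l. l ! k) (entry_pmf pX pYX s) = out_pmf pX pYX"
  unfolding entry_pmf_def out_pmf_def map_bind_pmf by (simp only: map_nth_replicate_pmf)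

lemma map_nth_pair_entry_pmf:
  "k < s \<Longrightarrow> k' < s \<Longrightarrow> k \<noteq> k' \<Longrightarrow>
    map_pmf (\<lambda>l. (l ! k, l ! k')) (entry_pmf pX pYX s) = bind_pmf pX (\<lambda>x. pair_pmf (pYX x) (pYX x))"
  unfolding entry_pmf_def map_bind_pmf by (simp add: map_nth_pair_replicate_pmf)

lemma map_mismatch_row_pmf:
  fixes n j j' :: nat
  assumes "j < n" "j' < n" "k < S j" "k' < S j'" "j = j' \<Longrightarrow> k \<noteq> k'"
  shows "map_pmf (\<lambda>L. L j ! k \<noteq> L j' ! k') (Pi_pmf {..<n} [] (\<lambda>j. entry_pmf pX pYX (S j)))
       = bernoulli_pmf (if j = j' then p1 pX pYX else p0 pX pYX)"
proof (cases "j = j'")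
  case True
  have component: "map_pmf (\<lambda>L. L j) (Pi_pmf {..<n} [] (\<lambda>j. entry_pmf pX pYX (S j))) =
      entry_pmf pX pYX (S j)"
    using assms by (subst Pi_pmf_component) auto
  have "map_pmf (\<lambda>L. L j ! k \<noteq> L j' ! k') (Pi_pmf {..<n} [] (\<lambda>j. entry_pmf pX pYX (S j)))
      = map_pmf (\<lambda>l. l ! k \<noteq> l ! k') (map_pmf (\<lambda>L. L j) (Pi_pmf {..<n} [] (\<lambda>j. entry_pmf pX pYX (S j))))"
    using True by (simp add: map_pmf_comp)
  also have "\<dots> = map_pmf (\<lambda>(a, b). a \<noteq> b) (map_pmf (\<lambda>l. (l ! k, l ! k')) (entry_pmf pX pYX (S j)))"
    by (simp add: component map_pmf_comp)
  also have "\<dots> = bernoulli_pmf (p1 pX pYX)"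
    using True assms
    by (simp add: map_nth_pair_entry_pmf map_pmf_eq_bernoulli_pmf p1_def p1_law_eq_bind_pair_pmf
        case_prod_unfold)
  finally show ?thesis using True by simp
next
  case False
  have "map_pmf (\<lambda>L. L j ! k \<noteq> L j' ! k') (Pi_pmf {..<n} [] (\<lambda>j. entry_pmf pX pYX (S j)))
      = map_pmf (\<lambda>(a, b). a ! k \<noteq> b ! k')
          (map_pmf (\<lambda>L. (L j, L j')) (Pi_pmf {..<n} [] (\<lambda>j. entry_pmf pX pYX (S j))))"
    by (simp add: map_pmf_comp)
  also have "map_pmf (\<lambda>L. (L j, L j')) (Pi_pmf {..<n} [] (\<lambda>j. entry_pmf pX pYX (S j)))
      = pair_pmf (entry_pmf pX pYX (S j)) (entry_pmf pX pYX (S j'))"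
    using assms False by (intro map_pmf_Pi_pmf_pair) auto
  also have "map_pmf (\<lambda>(a, b). a ! k \<noteq> b ! k')
      (pair_pmf (entry_pmf pX pYX (S j)) (entry_pmf pX pYX (S j'))) = map_pmf (\<lambda>(a, b). a \<noteq> b)
      (pair_pmf (map_pmf (\<lambda>l. l ! k) (entry_pmf pX pYX (S j)))
        (map_pmf (\<lambda>l. l ! k') (entry_pmf pX pYX (S j'))))"
    by (simp add: pair_map_pmf1 pair_map_pmf2 map_pmf_comp case_prod_unfold)
  also have "\<dots> = bernoulli_pmf (p0 pX pYX)"
    using assms
    by (simp add: map_nth_entry_pmf map_pmf_eq_bernoulli_pmf p0_def p0_law_eq_pair_out_pmf
        case_prod_unfold)
  finally show ?thesis using False by simp
qed

section \<open>Columns of the observed database\<close>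

text \<open>\<open>block_pos ls c = (j, k)\<close> locates index \<open>c\<close> of a concatenation of lists with lengths \<open>ls\<close>
  as the \<open>k\<close>-th element of the \<open>j\<close>-th list.\<close>
fun block_pos :: "nat list \<Rightarrow> nat \<Rightarrow> nat \<times> nat" where
  "block_pos [] c = (0, c)"
| "block_pos (l # ls) c =
    (if c < l then (0, c) else apfst Suc (block_pos ls (c - l)))"

lemma block_pos_bounds:
  "c < sum_list ls \<Longrightarrow> fst (block_pos ls c) < length ls \<and> snd (block_pos ls c) < ls ! fst (block_pos ls c)"
  by (induction ls arbitrary: c) auto

lemma block_pos_inj:
  "c < sum_list ls \<Longrightarrow> c' < sum_list ls \<Longrightarrow> block_pos ls c = block_pos ls c' \<Longrightarrow> c = c'"
proof (induction ls arbitrary: c c')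
  case Nil
  then show ?case by simp
next
  case (Cons l ls)
  show ?case
  proof (cases "c < l \<or> c' < l")
    case True
    with Cons.prems(3) show ?thesis
      by (auto split: if_splits simp: apfst_def map_prod_def case_prod_unfold)
  next
    case False
    with Cons.prems(3) have "block_pos ls (c - l) = block_pos ls (c' - l)"
      by (auto simp: apfst_def map_prod_def case_prod_unfold prod_eq_iff)
    moreover have "c - l < sum_list ls" "c' - l < sum_list ls"
      using False Cons.prems(1,2) by auto
    ultimately have "c - l = c' - l" using Cons.IH by blast
    with False show ?thesis by arith
  qed
qed

lemma nth_concat_block_pos:
  "c < sum_list ls \<Longrightarrow> map length ys = ls \<Longrightarrow>
    concat ys ! c = ys ! fst (block_pos ls c) ! snd (block_pos ls c)"
proof (induction ls arbitrary: c ys)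
  case Nil
  then show ?case by simp
next
  case (Cons l ls)
  then obtain y ys' where "ys = y # ys'" "length y = l" "map length ys' = ls"
    by (cases ys) auto
  with Cons show ?case by (auto simp: nth_append)
qed

lemma sum_list_map_eq_num_cols: "sum_list (map S [0..<n]) = num_cols S n"
  unfolding num_cols_def by (simp add: interv_sum_list_conv_sum_set_nat atLeast0LessThan)

lemma origin_eq_block_pos:
  assumes "c < num_cols S n"
  shows "origin S n c = fst (block_pos (map S [0..<n]) c)"
proof -
  obtain j k where jk: "block_pos (map S [0..<n]) c = (j, k)" by fastforce
  have "origin S n c = map (\<lambda>j. replicate (S j) j) [0..<n] ! fst (block_pos (map S [0..<n]) c)
      ! snd (block_pos (map S [0..<n]) c)"
    unfolding origin_def using assms
    by (intro nth_concat_block_pos) (simp_all add: sum_list_map_eq_num_cols)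
  moreover have "j < n" "k < S j"
    using assms jk block_pos_bounds[of c "map S [0..<n]"] by (auto simp: sum_list_map_eq_num_cols)
  ultimately show ?thesis using jk by simp
qed

lemma col_eq_block_pos:
  assumes "c < num_cols S n" "\<And>j. j < n \<Longrightarrow> length (D i j) = S j"
  shows "col n D c i = D i (fst (block_pos (map S [0..<n]) c)) ! snd (block_pos (map S [0..<n]) c)"
proof -
  have "col n D c i = map (D i) [0..<n] ! fst (block_pos (map S [0..<n]) c)
      ! snd (block_pos (map S [0..<n]) c)"
    unfolding col_def using assms
    by (intro nth_concat_block_pos) (simp_all add: sum_list_map_eq_num_cols)
  then show ?thesis
    using assms(1) block_pos_bounds[of c "map S [0..<n]"] by (simp add: sum_list_map_eq_num_cols)
qed

lemma adjacent_cols_entries: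
  assumes c: "c + 1 < num_cols S n"
  obtains j k j' k' where "j < n" "k < S j" "j' < n" "k' < S j'" "j = j' \<Longrightarrow> k \<noteq> k'"
    and "origin S n c = j" "origin S n (c + 1) = j'"
    and "\<And>D i. (\<And>j. j < n \<Longrightarrow> length (D i j) = S j) \<Longrightarrow>
      col n D c i = D i j ! k \<and> col n D (c + 1) i = D i j' ! k'"
proof -
  define ls where "ls = map S [0..<n]"
  obtain j k where jk: "block_pos ls c = (j, k)" by fastforce
  obtain j' k' where jk': "block_pos ls (c + 1) = (j', k')" by fastforce
  have len: "sum_list ls = num_cols S n"
    unfolding ls_def by (rule sum_list_map_eq_num_cols)
  show ?thesis
  proof
    show "j < n" "k < S j" "j' < n" "k' < S j'"
      using block_pos_bounds[of c ls] block_pos_bounds[of "c + 1" ls] c len jk jk'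
      by (auto simp: ls_def)
    show "k \<noteq> k'" if "j = j'"
      using block_pos_inj[of c ls "c + 1"] c len jk jk' that by auto
    show "origin S n c = j" "origin S n (c + 1) = j'"
      using origin_eq_block_pos[of c S n] origin_eq_block_pos[of "c + 1" S n] c jk jk'
      by (simp_all add: ls_def)
    show "col n D c i = D i j ! k \<and> col n D (c + 1) i = D i j' ! k'"
      if "\<And>j. j < n \<Longrightarrow> length (D i j) = S j" for D :: "nat \<Rightarrow> nat \<Rightarrow> 'a list" and i
      using col_eq_block_pos[of c S n D i] col_eq_block_pos[of "c + 1" S n D i] that c jk jk'
      by (simp add: ls_def)
  qed
qed

lemma dH_adjacent_cols_binomial:
  fixes pX :: "'x pmf" and pYX :: "'x \<Rightarrow> 'y pmf"
  assumes c: "c + 1 < num_cols S n"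
  shows "map_pmf (\<lambda>D2. dH m (col n (curry D2) c) (col n (curry D2) (c + 1))) (noisy_db_pmf pX pYX S m n)
         = binomial_pmf m (if origin S n c = origin S n (c + 1) then p1 pX pYX else p0 pX pYX)"
proof -
  obtain j k j' k' where bounds: "j < n" "k < S j" "j' < n" "k' < S j'" "j = j' \<Longrightarrow> k \<noteq> k'"
    and origin: "origin S n c = j" "origin S n (c + 1) = j'"
    and cols: "\<And>(D :: nat \<Rightarrow> nat \<Rightarrow> 'y list) i. (\<And>j. j < n \<Longrightarrow> length (D i j) = S j) \<Longrightarrow>
      col n D c i = D i j ! k \<and> col n D (c + 1) i = D i j' ! k'"
    using adjacent_cols_entries[OF c] by blast
  define mismatch where "mismatch = (\<lambda>L :: nat \<Rightarrow> 'y list. L j ! k \<noteq> L j' ! k')"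
  define row where "row = Pi_pmf {..<n} [] (\<lambda>j. entry_pmf pX pYX (S j))"
  define p where "p = (if j = j' then p1 pX pYX else p0 pX pYX)"
  have rows: "noisy_db_pmf pX pYX S m n = map_pmf case_prod (Pi_pmf {..<m} (\<lambda>_. []) (\<lambda>_. row))"
    unfolding noisy_db_pmf_def row_def
    using Pi_pmf_Times[of "{..<m}" "{..<n}" "[]" "\<lambda>a b. entry_pmf pX pYX (S b)"] by simp
  have "dH m (col n (curry D2) c) (col n (curry D2) (c + 1)) = card {i\<in>{..<m}. mismatch (curry D2 i)}"
    if "D2 \<in> set_pmf (noisy_db_pmf pX pYX S m n)" for D2
    using cols[of "curry D2"] length_noisy_db_entry[OF that]
    unfolding dH_def mismatch_def by (intro arg_cong[where f=card]) auto
  then have "map_pmf (\<lambda>D2. dH m (col n (curry D2) c) (col n (curry D2) (c + 1))) (noisy_db_pmf pX pYX S m n)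
      = map_pmf (\<lambda>b. card {i\<in>{..<m}. b i}) (map_pmf (\<lambda>F. mismatch \<circ> F) (Pi_pmf {..<m} (\<lambda>_. []) (\<lambda>_. row)))"
    by (subst map_pmf_cong[OF refl]) (auto simp: rows map_pmf_comp)
  also have "map_pmf (\<lambda>F. mismatch \<circ> F) (Pi_pmf {..<m} (\<lambda>_. []) (\<lambda>_. row)) =
      Pi_pmf {..<m} (mismatch (\<lambda>_. [])) (\<lambda>_. map_pmf mismatch row)"
    by (rule Pi_pmf_map[symmetric]) auto
  also have "map_pmf mismatch row = bernoulli_pmf p"
    unfolding mismatch_def row_def p_def using bounds by (intro map_mismatch_row_pmf) auto
  also have "map_pmf (\<lambda>b. card {i\<in>{..<m}. b i})
      (Pi_pmf {..<m} (mismatch (\<lambda>_. [])) (\<lambda>_. bernoulli_pmf p)) = binomial_pmf m p"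
    using p0_p1_in_unit_interval by (intro binomial_pmf_altdef'[symmetric]) (auto simp: p_def)
  finally show ?thesis unfolding p_def origin .
qed

section \<open>The error probability\<close>

lemma binomial_pmf_upper_tail_le:
  assumes "p \<in> {0..1}" "0 < m" "0 \<le> \<delta>" "\<delta> \<le> \<tau> - p"
  shows "measure_pmf.prob (binomial_pmf m p) {x. real m * \<tau> \<le> real x} \<le> exp (- 2 * real m * \<delta>\<^sup>2)"
proof -
  interpret binomial_distribution m p using assms(1) by unfold_locales
  have "measure_pmf.prob (binomial_pmf m p) {x. real m * \<tau> \<le> real x}
      \<le> measure_pmf.prob (binomial_pmf m p) {x. p + (\<tau> - p) \<le> real x / real m}"
    using assms(2) by (intro measure_pmf.finite_measure_mono) (auto simp: field_simps)
  also have "\<dots> \<le> exp (- 2 * real m * (\<tau> - p)\<^sup>2)"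
    using prob_ge'[OF assms(2), of "\<tau> - p"] assms by simp
  also have "\<dots> \<le> exp (- 2 * real m * \<delta>\<^sup>2)"
    using assms by (auto intro!: mult_left_mono power_mono)
  finally show ?thesis .
qed

lemma binomial_pmf_lower_tail_le:
  assumes "p \<in> {0..1}" "0 < m" "0 \<le> \<delta>" "\<delta> \<le> p - \<tau>"
  shows "measure_pmf.prob (binomial_pmf m p) {x. real x < real m * \<tau>} \<le> exp (- 2 * real m * \<delta>\<^sup>2)"
proof -
  interpret binomial_distribution m p using assms(1) by unfold_locales
  have "measure_pmf.prob (binomial_pmf m p) {x. real x < real m * \<tau>}
      \<le> measure_pmf.prob (binomial_pmf m p) {x. real x / real m \<le> p - (p - \<tau>)}"
    using assms(2) by (intro measure_pmf.finite_measure_mono) (auto simp: field_simps)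
  also have "\<dots> \<le> exp (- 2 * real m * (p - \<tau>)\<^sup>2)"
    using prob_le'[OF assms(2), of "p - \<tau>"] assms by simp
  also have "\<dots> \<le> exp (- 2 * real m * \<delta>\<^sup>2)"
    using assms by (auto intro!: mult_left_mono power_mono)
  finally show ?thesis .
qed

lemma adjacent_error_prob_le:
  assumes "c + 1 < num_cols S n" "0 < m" "0 \<le> \<delta>"
    and "\<delta> \<le> \<tau> - p1 pX pYX" "\<delta> \<le> p0 pX pYX - \<tau>"
  shows "measure_pmf.prob (noisy_db_pmf pX pYX S m n)
      {D2. (real (dH m (col n (curry D2) c) (col n (curry D2) (c + 1))) < real m * \<tau>)
        \<noteq> (origin S n c = origin S n (c + 1))} \<le> exp (- 2 * real m * \<delta>\<^sup>2)"
proof -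
  define same where "same \<longleftrightarrow> origin S n c = origin S n (c + 1)"
  have "measure_pmf.prob (noisy_db_pmf pX pYX S m n)
      {D2. (real (dH m (col n (curry D2) c) (col n (curry D2) (c + 1))) < real m * \<tau>) \<noteq> same}
    = measure_pmf.prob (binomial_pmf m (if same then p1 pX pYX else p0 pX pYX))
        {x. (real x < real m * \<tau>) \<noteq> same}"
    unfolding same_def dH_adjacent_cols_binomial[OF assms(1), symmetric] by (simp add: vimage_def)
  also have "\<dots> \<le> exp (- 2 * real m * \<delta>\<^sup>2)"
  proof (cases same)
    case True
    then show ?thesis
      using binomial_pmf_upper_tail_le[OF p0_p1_in_unit_interval(2) assms(2-4)] by (simp add: not_less)
  next
    case False
    then show ?thesis
      using binomial_pmf_lower_tail_le[OF p0_p1_in_unit_interval(1) assms(2,3,5)] by simp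
  qed
  finally show ?thesis unfolding same_def .
qed

lemma noisy_db_err_prob_le:
  fixes pX :: "'x pmf" and pYX :: "'x \<Rightarrow> 'y pmf"
  assumes "0 < m" "0 \<le> \<delta>" "\<delta> \<le> \<tau> - p1 pX pYX" "\<delta> \<le> p0 pX pYX - \<tau>"
    and "\<And>j. j < n \<Longrightarrow> S j \<le> smax"
  shows "measure_pmf.prob (noisy_db_pmf pX pYX S m n) {D2. (S, curry D2) \<in> err_event m n \<tau>}
         \<le> real (n * smax) * exp (- 2 * real m * \<delta>\<^sup>2)"
proof -
  define E where "E c = {D2 :: nat \<times> nat \<Rightarrow> 'y list.
      (real (dH m (col n (curry D2) c) (col n (curry D2) (c + 1))) < real m * \<tau>)
        \<noteq> (origin S n c = origin S n (c + 1))}" for c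
  define pairs where "pairs = {c. c + 1 < num_cols S n}"
  have "num_cols S n \<le> n * smax"
    unfolding num_cols_def using sum_bounded_above[of "{..<n}" S smax] assms(5) by simp
  then have pairs: "pairs \<subseteq> {..<n * smax}"
    unfolding pairs_def by auto
  then have card: "card pairs \<le> n * smax" and fin: "finite pairs"
    using card_mono[OF finite_lessThan pairs] finite_subset[OF pairs] by simp_all
  have "measure_pmf.prob (noisy_db_pmf pX pYX S m n) {D2. (S, curry D2) \<in> err_event m n \<tau>}
      \<le> measure_pmf.prob (noisy_db_pmf pX pYX S m n) (\<Union>c\<in>pairs. E c)"
    by (intro measure_pmf.finite_measure_mono) (auto simp: err_event_def E_def pairs_def)
  also have "\<dots> \<le> (\<Sum>c\<in>pairs. measure_pmf.prob (noisy_db_pmf pX pYX S m n) (E c))"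
    using fin by (intro measure_pmf.finite_measure_subadditive_finite) auto
  also have "\<dots> \<le> (\<Sum>c\<in>pairs. exp (- 2 * real m * \<delta>\<^sup>2))"
    using assms unfolding E_def pairs_def by (intro sum_mono adjacent_error_prob_le) auto
  also have "\<dots> = real (card pairs) * exp (- 2 * real m * \<delta>\<^sup>2)"
    by simp
  also have "\<dots> \<le> real (n * smax) * exp (- 2 * real m * \<delta>\<^sup>2)"
    by (intro mult_right_mono of_nat_mono card) simp
  finally show ?thesis .
qed

lemma err_event_prob_le:
  assumes "0 < m" "0 \<le> \<delta>" "\<delta> \<le> \<tau> - p1 pX pYX" "\<delta> \<le> p0 pX pYX - \<tau>"
    and "set_pmf pS \<subseteq> {0..smax}"
  shows "measure_pmf.prob (db_dist pX pYX pS m n) (err_event m n \<tau>)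
         \<le> real (n * smax) * exp (- 2 * real m * \<delta>\<^sup>2)"
  unfolding db_dist_eq_bind_noisy_db_pmf
proof (rule measure_pmf_bind_le)
  fix S assume S: "S \<in> set_pmf (Pi_pmf {..<n} 0 (\<lambda>_. pS))"
  have "S j \<le> smax" if "j < n" for j
    using S that assms(5) by (subst (asm) set_Pi_pmf) (auto simp: PiE_dflt_def)
  then show "measure_pmf.prob (map_pmf (\<lambda>D2. (S, curry D2)) (noisy_db_pmf pX pYX S m n)) (err_event m n \<tau>)
      \<le> real (n * smax) * exp (- 2 * real m * \<delta>\<^sup>2)"
    using noisy_db_err_prob_le[OF assms(1-4)] by (simp add: vimage_def)
qed simp

section \<open>Exponentially growing databases\<close>

lemma exp_neg_le_inverse:
  fixes x :: real
  assumes "0 < x"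
  shows "exp (- x) \<le> 1 / x"
proof -
  have "x \<le> exp x" using exp_ge_add_one_self[of x] by linarith
  then show ?thesis using assms by (simp add: exp_minus divide_inverse le_imp_inverse_le)
qed

lemma exponential_growth_eventually_ge:
  assumes "(\<lambda>n. ln (real (m n)) / real n) \<longlonglongrightarrow> R" "0 < R"
  shows "eventually (\<lambda>n. 0 < m n \<and> (R * real n)\<^sup>2 / 8 \<le> real (m n)) sequentially"
proof -
  have "R / 2 < R" using assms(2) by simp
  from order_tendstoD(1)[OF assms(1) this] eventually_gt_at_top[of 0]
  show ?thesis
  proof eventually_elim
  case (elim n)
  then have "0 < m n" using assms(2) by (cases "m n = 0") auto
  have "R / 2 * real n < ln (real (m n))" using elim by (simp add: field_simps)
  then have "exp (R / 2 * real n) < real (m n)"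
    using \<open>0 < m n\<close> by (metis exp_less_cancel_iff exp_ln of_nat_0_less_iff)
  moreover have "(R / 2 * real n)\<^sup>2 / 2 \<le> exp (R / 2 * real n)"
  proof -
    have "0 \<le> R / 2 * real n" using assms(2) by simp
    then show ?thesis using exp_lower_Taylor_quadratic[of "R / 2 * real n"] by linarith
  qed
  ultimately show ?case
    using \<open>0 < m n\<close> by (simp add: power_mult_distrib power_divide)
  qed
qed

lemma union_bound_tendsto_zero:
  assumes "(\<lambda>n. ln (real (m n)) / real n) \<longlonglongrightarrow> R" "0 < R" "0 < \<delta>"
  shows "(\<lambda>n. real (n * smax) * exp (- 2 * real (m n) * \<delta>\<^sup>2)) \<longlonglongrightarrow> 0"
proof (rule tendsto_sandwich[OF _ _ tendsto_const lim_const_over_n])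
  show "eventually (\<lambda>n. 0 \<le> real (n * smax) * exp (- 2 * real (m n) * \<delta>\<^sup>2)) sequentially"
    by simp
  show "eventually (\<lambda>n. real (n * smax) * exp (- 2 * real (m n) * \<delta>\<^sup>2)
      \<le> (4 * real smax / (\<delta>\<^sup>2 * R\<^sup>2)) / real n) sequentially"
    using exponential_growth_eventually_ge[OF assms(1,2)] eventually_gt_at_top[of 0]
  proof eventually_elim
    case (elim n)
    define lower where "lower = 2 * ((R * real n)\<^sup>2 / 8) * \<delta>\<^sup>2"
    have lower_pos: "0 < lower"
      using elim assms(2,3) by (simp add: lower_def)
    have lower_le: "lower \<le> 2 * real (m n) * \<delta>\<^sup>2"
      using elim mult_right_mono[of "(R * real n)\<^sup>2 / 8" "real (m n)" "\<delta>\<^sup>2"]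
      by (simp add: lower_def)
    have "exp (- 2 * real (m n) * \<delta>\<^sup>2) \<le> 1 / (2 * real (m n) * \<delta>\<^sup>2)"
      using exp_neg_le_inverse[of "2 * real (m n) * \<delta>\<^sup>2"] lower_pos lower_le by simp
    also have "\<dots> \<le> 1 / lower"
      using lower_pos lower_le by (intro divide_left_mono) auto
    finally have "real (n * smax) * exp (- 2 * real (m n) * \<delta>\<^sup>2)
        \<le> real (n * smax) * (1 / lower)"
      by (intro mult_left_mono) auto
    also have "\<dots> = (4 * real smax / (\<delta>\<^sup>2 * R\<^sup>2)) / real n"
      using elim assms(2,3) by (simp add: lower_def field_simps power2_eq_square)
    finally show ?case .
  qed
qed

theorem lemma1:
  fixes pX :: "'x::finite pmf" and pYX :: "'x \<Rightarrow> 'y::finite pmf"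
    and pS :: "nat pmf" and smax :: nat and m :: "nat \<Rightarrow> nat" and R :: real
  assumes "set_pmf pS \<subseteq> {0..smax}"
    and "joint_pmf pX pYX \<noteq> pair_pmf pX (out_pmf pX pYX)"
    and "(\<lambda>n. ln (real (m n)) / real n) \<longlonglongrightarrow> R"
    and "R > 0"
  shows "p1 pX pYX < p0 pX pYX \<and>
    (\<forall>\<tau>. p1 pX pYX < \<tau> \<and> \<tau> < p0 pX pYX \<longrightarrow>
      (\<lambda>n. measure_pmf.prob (db_dist pX pYX pS (m n) n) (err_event (m n) n \<tau>))
        \<longlonglongrightarrow> 0)"
proof (intro conjI allI impI)
  show "p1 pX pYX < p0 pX pYX" using p1_less_p0[OF assms(2)] .
  fix \<tau> assume \<tau>: "p1 pX pYX < \<tau> \<and> \<tau> < p0 pX pYX"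
  define \<delta> where "\<delta> = min (\<tau> - p1 pX pYX) (p0 pX pYX - \<tau>)"
  have "0 < \<delta>" using \<tau> unfolding \<delta>_def by auto
  have "eventually (\<lambda>n. measure_pmf.prob (db_dist pX pYX pS (m n) n) (err_event (m n) n \<tau>)
      \<le> real (n * smax) * exp (- 2 * real (m n) * \<delta>\<^sup>2)) sequentially"
    using exponential_growth_eventually_ge[OF assms(3,4)]
  proof eventually_elim
    case (elim n)
    then show ?case
      using \<open>0 < \<delta>\<close> assms(1) by (intro err_event_prob_le) (auto simp: \<delta>_def)
  qed
  then show "(\<lambda>n. measure_pmf.prob (db_dist pX pYX pS (m n) n) (err_event (m n) n \<tau>)) \<longlonglongrightarrow> 0"
    by (intro tendsto_sandwich[OF _ _ tendsto_const union_bound_tendsto_zero[OF assms(3,4) \<open>0 < \<delta>\<close>]])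
      auto
qed

end
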